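(* Fix an integer $r\ge1$. For an integer $m$ let $N=mr$, and let $\xi^{(N,k,k')}_{i,j}$, $k,k'\in\{1,\dots,r\}$, $i,j\in\{1,\dots,m\}$, be independent random variables such that $\xi^{(N,k,k)}_{i,j}$ is Bernoulli with parameter $q_N$, where $\frac1{q_N}=o\left(\frac N{\log N}\right)$, and for $k\ne k'$, $\xi^{(N,k,k')}_{i,j}$ is Bernoulli with parameter $q^{k,k'}_N$, where $q^{k,k'}_N=o(q_N)$. Define $d_i^{(N,k)}=\sum_{k'=1}^r\sum_{j=1}^m\xi^{(N,k,k')}_{i,j}$ and $\tilde d_i^{(N,k)}=\sum_{k'=1}^r\sum_{j=1}^m\xi^{(N,k,k')}_{j,i}$. Then there is a constant $C$ such that, almost surely, \[\limsup_{m\to\infty}\sup_{k\in\{1,\dots,r\}}\sup_{i\in\{1,\dots,m\}}\frac1{q_N}\left(\frac{d_i^{(N,k)}}N+\frac{\tilde d_i^{(N,k)}}N\right)\le C,\] and moreover \[\sup_{k\in\{1,\dots,r\}}\sup_{i\in\{1,\dots,m\}}\left|\frac{d_i^{(N,k)}}{Nq_N}-\frac1r\right|\xrightarrow[N\to\infty]{}0\quad\text{almost surely}.\]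
   Context: The limit $N\to\infty$ is taken with $r$ fixed and $m\to\infty$. *)

theory Defs
  imports "HOL-Probability.Probability" "HOL-Library.Landau_Symbols"
begin

text \<open>Random variables xi m k k' i j, with N = m*r.
  Out-degree d and in-degree dtilde of vertex i in block k.\<close>

definition out_deg :: "nat \<Rightarrow> (nat \<Rightarrow> nat \<Rightarrow> nat \<Rightarrow> nat \<Rightarrow> nat \<Rightarrow> 'a \<Rightarrow> real)
    \<Rightarrow> nat \<Rightarrow> nat \<Rightarrow> nat \<Rightarrow> 'a \<Rightarrow> real" where
  "out_deg r \<xi> m k i x = (\<Sum>k'\<in>{1..r}. \<Sum>j\<in>{1..m}. \<xi> m k k' i j x)"

definition in_deg :: "nat \<Rightarrow> (nat \<Rightarrow> nat \<Rightarrow> nat \<Rightarrow> nat \<Rightarrow> nat \<Rightarrow> 'a \<Rightarrow> real)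
    \<Rightarrow> nat \<Rightarrow> nat \<Rightarrow> nat \<Rightarrow> 'a \<Rightarrow> real" where
  "in_deg r \<xi> m k i x = (\<Sum>k'\<in>{1..r}. \<Sum>j\<in>{1..m}. \<xi> m k k' j i x)"

definition bernoulli_rv :: "'a measure \<Rightarrow> ('a \<Rightarrow> real) \<Rightarrow> real \<Rightarrow> bool" where
  "bernoulli_rv M X p \<longleftrightarrow> X \<in> borel_measurable M \<and> (AE x in M. X x \<in> {0, 1})
     \<and> measure M {x \<in> space M. X x = 1} = p"

end

theory Submission
  imports Defs
begin

text \<open>
  Each degree is a sum of \<open>r m\<close> independent Bernoulli variables whose mean is
  \<open>m q\<^sub>N (1 + o(1))\<close>, because the off-diagonal probabilities are \<open>o(q\<^sub>N)\<close>.
  A multiplicative Chernoff bound makes a relative deviation \<open>\<epsilon>\<close> of a single degree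
  have probability at most \<open>2 exp (- m q\<^sub>N \<epsilon>\<^sup>2 / 16)\<close>, and the density assumption
  \<open>m q\<^sub>N \<gg> log N\<close> makes this \<open>O(m\<^sup>-\<^sup>3)\<close>. A union bound over the \<open>r m\<close> vertices leaves a
  summable series, so by Borel--Cantelli almost surely all degrees are eventually within a
  factor \<open>1 \<plusminus> \<epsilon>\<close> of \<open>m q\<^sub>N = N q\<^sub>N / r\<close>. Taking \<open>\<epsilon> = 1\<close> gives the first claim with
  \<open>C = 4\<close>, and letting \<open>\<epsilon> = 1/(n+1)\<close> range over a countable family gives the second.
\<close>

lemma exp_minus_le_quadratic:
  fixes l :: real
  assumes "0 \<le> l"
  shows "exp (- l) \<le> 1 - l + l\<^sup>2"
proof -
  have pos: "0 < 1 + l" using assms by simp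
  have "exp (- l) = 1 / exp l" by (simp add: exp_minus field_simps)
  also have "\<dots> \<le> 1 / (1 + l)"
    using exp_ge_add_one_self[of l] pos by (intro divide_left_mono) auto
  also have "\<dots> \<le> 1 - l + l\<^sup>2"
  proof -
    have "1 \<le> (1 - l + l\<^sup>2) * (1 + l)"
      using assms by (simp add: algebra_simps power2_eq_square power3_eq_cube)
    then show ?thesis using pos by (simp add: divide_le_eq)
  qed
  finally show ?thesis .
qed

context prob_space
begin

lemma mgf_sum_indep_01:
  fixes X :: "'i \<Rightarrow> 'a \<Rightarrow> real"
  assumes fin: "finite J" and ind: "indep_vars (\<lambda>_. borel) X J"
    and ae: "\<And>t. t \<in> J \<Longrightarrow> AE x in M. X t x \<in> {0, 1}"
  shows "integrable M (\<lambda>x. exp (l * (\<Sum>t\<in>J. X t x)))"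
    and "expectation (\<lambda>x. exp (l * (\<Sum>t\<in>J. X t x)))
         \<le> exp ((\<Sum>t\<in>J. prob {x\<in>space M. X t x = 1}) * (exp l - 1))"
proof -
  have [measurable]: "t \<in> J \<Longrightarrow> X t \<in> borel_measurable M" for t
    using ind unfolding indep_vars_def by auto
  define p where "p t = prob {x\<in>space M. X t x = 1}" for t
  define Y where "Y t x = exp (l * X t x)" for t x
  have indY: "indep_vars (\<lambda>_. borel) Y J"
    unfolding Y_def by (rule indep_vars_compose2[OF ind]) measurable
  define g where "g t = (\<lambda>x. 1 + (exp l - 1) * indicator {x\<in>space M. X t x = 1} x)" for t
  have Y_eq_g: "AE x in M. Y t x = g t x" if "t \<in> J" for t
    using ae[OF that] AE_space by eventually_elim (auto simp: Y_def g_def indicator_def)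
  have [measurable]: "t \<in> J \<Longrightarrow> Y t \<in> borel_measurable M" "t \<in> J \<Longrightarrow> g t \<in> borel_measurable M" for t
    unfolding Y_def g_def by measurable
  have g_integrable: "integrable M (g t)" and g_integral: "expectation (g t) = 1 + (exp l - 1) * p t"
    if "t \<in> J" for t
    using that unfolding g_def p_def
    by (auto simp: emeasure_eq_measure prob_space intro!: Bochner_Integration.integrable_add)
  have Y_integrable: "integrable M (Y t)" and Y_integral: "expectation (Y t) = 1 + (exp l - 1) * p t"
    if "t \<in> J" for t
    using integrable_cong_AE[OF _ _ Y_eq_g[OF that]] integral_cong_AE[OF _ _ Y_eq_g[OF that]]
      g_integrable[OF that] g_integral[OF that] that by auto
  have prod_Y: "(\<lambda>x. exp (l * (\<Sum>t\<in>J. X t x))) = (\<lambda>x. \<Prod>t\<in>J. Y t x)"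
    using fin by (simp add: Y_def sum_distrib_left exp_sum)
  show "integrable M (\<lambda>x. exp (l * (\<Sum>t\<in>J. X t x)))"
    unfolding prod_Y using indep_vars_integrable[OF fin indY Y_integrable] by simp
  have "expectation (\<lambda>x. exp (l * (\<Sum>t\<in>J. X t x))) = (\<Prod>t\<in>J. 1 + (exp l - 1) * p t)"
    unfolding prod_Y using indep_vars_lebesgue_integral[OF fin indY Y_integrable] Y_integral by simp
  also have "\<dots> \<le> (\<Prod>t\<in>J. exp (p t * (exp l - 1)))"
  proof (rule prod_mono, safe)
    fix t
    have "0 \<le> p t" "p t \<le> 1" by (auto simp: p_def)
    then have "0 \<le> (1 - p t) + exp l * p t" by simp
    then show "0 \<le> 1 + (exp l - 1) * p t" by (simp add: algebra_simps)
    show "1 + (exp l - 1) * p t \<le> exp (p t * (exp l - 1))"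
      using exp_ge_add_one_self[of "p t * (exp l - 1)"] by (simp add: mult.commute)
  qed
  also have "\<dots> = exp ((\<Sum>t\<in>J. p t) * (exp l - 1))"
    using fin by (simp add: exp_sum sum_distrib_right)
  finally show "expectation (\<lambda>x. exp (l * (\<Sum>t\<in>J. X t x)))
         \<le> exp ((\<Sum>t\<in>J. prob {x\<in>space M. X t x = 1}) * (exp l - 1))"
    by (simp add: p_def)
qed

text \<open>The factor \<open>l\<close> may have either sign, so this gives the upper tail (\<open>l > 0\<close>)
  and the lower tail (\<open>l < 0\<close>) at once.\<close>

lemma prob_sum_indep_01_chernoff:
  fixes X :: "'i \<Rightarrow> 'a \<Rightarrow> real"
  assumes fin: "finite J" and ind: "indep_vars (\<lambda>_. borel) X J"
    and ae: "\<And>t. t \<in> J \<Longrightarrow> AE x in M. X t x \<in> {0, 1}"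
  shows "prob {x\<in>space M. l * a \<le> l * (\<Sum>t\<in>J. X t x)}
     \<le> exp ((\<Sum>t\<in>J. prob {x\<in>space M. X t x = 1}) * (exp l - 1) - l * a)"
proof -
  have [measurable]: "t \<in> J \<Longrightarrow> X t \<in> borel_measurable M" for t
    using ind unfolding indep_vars_def by auto
  have "prob {x\<in>space M. l * a \<le> l * (\<Sum>t\<in>J. X t x)}
      = prob {x\<in>space M. exp (l * a) \<le> exp (l * (\<Sum>t\<in>J. X t x))}"
    by simp
  also have "\<dots> \<le> expectation (\<lambda>x. exp (l * (\<Sum>t\<in>J. X t x))) / exp (l * a)"
    by (rule integral_Markov_inequality_measure[OF mgf_sum_indep_01(1)[OF fin ind ae]]) auto
  also have "\<dots> \<le> exp ((\<Sum>t\<in>J. prob {x\<in>space M. X t x = 1}) * (exp l - 1)) / exp (l * a)"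
    by (intro divide_right_mono mgf_sum_indep_01(2)[OF fin ind ae]) auto
  finally show ?thesis by (simp add: exp_diff)
qed

lemma prob_sum_indep_01_upper_tail:
  fixes X :: "'i \<Rightarrow> 'a \<Rightarrow> real"
  assumes fin: "finite J" and ind: "indep_vars (\<lambda>_. borel) X J"
    and ae: "\<And>t. t \<in> J \<Longrightarrow> AE x in M. X t x \<in> {0, 1}"
    and A: "0 < A" and e: "0 < e" "e \<le> 1"
    and mean: "(\<Sum>t\<in>J. prob {x\<in>space M. X t x = 1}) \<le> A * (1 + e / 4)"
  shows "prob {x\<in>space M. A * (1 + e) \<le> (\<Sum>t\<in>J. X t x)} \<le> exp (- (A * e\<^sup>2 / 16))"
proof -
  define \<mu> where "\<mu> = (\<Sum>t\<in>J. prob {x\<in>space M. X t x = 1})"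
  define l where "l = e / 2"
  have l: "0 < l" "l \<le> 1" using e by (auto simp: l_def)
  have "prob {x\<in>space M. A * (1 + e) \<le> (\<Sum>t\<in>J. X t x)}
      \<le> exp (\<mu> * (exp l - 1) - l * (A * (1 + e)))"
    using prob_sum_indep_01_chernoff[OF fin ind ae, of l "A * (1 + e)"] l by (simp add: \<mu>_def)
  also have "\<dots> \<le> exp (- (A * e\<^sup>2 / 16))"
  proof -
    have "0 \<le> \<mu>" unfolding \<mu>_def by (simp add: sum_nonneg)
    then have "\<mu> * (exp l - 1) \<le> \<mu> * (l + l\<^sup>2)"
      using exp_bound[of l] l by (intro mult_left_mono) auto
    also have "\<dots> \<le> A * (1 + e / 4) * (l + l\<^sup>2)"
      using mean l by (intro mult_right_mono) (auto simp: \<mu>_def)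
    also have "\<dots> = l * (A * (1 + e)) + A * (e ^ 3 / 16 - e\<^sup>2 / 8)"
      by (simp add: l_def algebra_simps power2_eq_square power3_eq_cube)
    also have "\<dots> \<le> l * (A * (1 + e)) - A * e\<^sup>2 / 16"
    proof -
      have "e ^ 3 \<le> e\<^sup>2" using e by (simp add: power3_eq_cube power2_eq_square mult_left_le_one_le)
      then show ?thesis using A by (simp add: algebra_simps mult_left_mono)
    qed
    finally show ?thesis by simp
  qed
  finally show ?thesis .
qed

lemma prob_sum_indep_01_lower_tail:
  fixes X :: "'i \<Rightarrow> 'a \<Rightarrow> real"
  assumes fin: "finite J" and ind: "indep_vars (\<lambda>_. borel) X J"
    and ae: "\<And>t. t \<in> J \<Longrightarrow> AE x in M. X t x \<in> {0, 1}"
    and A: "0 < A" and e: "0 < e" "e \<le> 1"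
    and mean: "A \<le> (\<Sum>t\<in>J. prob {x\<in>space M. X t x = 1})"
  shows "prob {x\<in>space M. (\<Sum>t\<in>J. X t x) \<le> A * (1 - e)} \<le> exp (- (A * e\<^sup>2 / 16))"
proof -
  define \<mu> where "\<mu> = (\<Sum>t\<in>J. prob {x\<in>space M. X t x = 1})"
  define l where "l = e / 2"
  have l: "0 < l" using e by (auto simp: l_def)
  have "prob {x\<in>space M. (\<Sum>t\<in>J. X t x) \<le> A * (1 - e)}
      \<le> exp (\<mu> * (exp (- l) - 1) + l * (A * (1 - e)))"
    using prob_sum_indep_01_chernoff[OF fin ind ae, of "- l" "A * (1 - e)"] l by (simp add: \<mu>_def)
  also have "\<dots> \<le> exp (- (A * e\<^sup>2 / 16))"
  proof -
    have "\<mu> * (exp (- l) - 1) \<le> A * (exp (- l) - 1)"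
      using mean l by (intro mult_right_mono_neg) (auto simp: \<mu>_def)
    also have "\<dots> \<le> A * (- l + l\<^sup>2)"
      using exp_minus_le_quadratic[of l] l A by (intro mult_left_mono) auto
    also have "\<dots> = - l * (A * (1 - e)) - A * e\<^sup>2 / 4"
      by (simp add: l_def field_simps power2_eq_square)
    also have "\<dots> \<le> - l * (A * (1 - e)) - A * e\<^sup>2 / 16"
      using A by simp
    finally show ?thesis by simp
  qed
  finally show ?thesis .
qed

lemma prob_sum_indep_01_relative_deviation:
  fixes X :: "'i \<Rightarrow> 'a \<Rightarrow> real"
  assumes fin: "finite J" and ind: "indep_vars (\<lambda>_. borel) X J"
    and ae: "\<And>t. t \<in> J \<Longrightarrow> AE x in M. X t x \<in> {0, 1}"
    and A: "0 < A" and e: "0 < e" "e \<le> 1"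
    and mean: "A \<le> (\<Sum>t\<in>J. prob {x\<in>space M. X t x = 1})"
      "(\<Sum>t\<in>J. prob {x\<in>space M. X t x = 1}) \<le> A * (1 + e / 4)"
  shows "prob {x\<in>space M. e * A \<le> \<bar>(\<Sum>t\<in>J. X t x) - A\<bar>} \<le> 2 * exp (- (A * e\<^sup>2 / 16))"
proof -
  have [measurable]: "t \<in> J \<Longrightarrow> X t \<in> borel_measurable M" for t
    using ind unfolding indep_vars_def by auto
  have "{x\<in>space M. e * A \<le> \<bar>(\<Sum>t\<in>J. X t x) - A\<bar>}
      = {x\<in>space M. A * (1 + e) \<le> (\<Sum>t\<in>J. X t x)} \<union> {x\<in>space M. (\<Sum>t\<in>J. X t x) \<le> A * (1 - e)}"
    by (auto simp: algebra_simps abs_if)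
  also have "prob \<dots> \<le> prob {x\<in>space M. A * (1 + e) \<le> (\<Sum>t\<in>J. X t x)}
      + prob {x\<in>space M. (\<Sum>t\<in>J. X t x) \<le> A * (1 - e)}"
    by (rule measure_Un_le) measurable
  also have "\<dots> \<le> 2 * exp (- (A * e\<^sup>2 / 16))"
    using prob_sum_indep_01_upper_tail[OF fin ind ae A e mean(2)]
      prob_sum_indep_01_lower_tail[OF fin ind ae A e mean(1)] by simp
  finally show ?thesis .
qed

lemma AE_eventually_uniform_concentration:
  fixes X :: "nat \<Rightarrow> 'i \<Rightarrow> 'a \<Rightarrow> real" and J :: "nat \<Rightarrow> 'p \<Rightarrow> 'i set" and A :: "nat \<Rightarrow> real"
  assumes finP: "\<And>m. finite (P m)"
    and finJ: "\<And>m p. p \<in> P m \<Longrightarrow> finite (J m p)"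
    and ind: "\<And>m p. p \<in> P m \<Longrightarrow> indep_vars (\<lambda>_. borel) (X m) (J m p)"
    and ae: "\<And>m p t. p \<in> P m \<Longrightarrow> t \<in> J m p \<Longrightarrow> AE x in M. X m t x \<in> {0, 1}"
    and e: "0 < e" "e \<le> 1"
    and mean: "eventually (\<lambda>m. 0 < A m \<and> (\<forall>p\<in>P m.
        A m \<le> (\<Sum>t\<in>J m p. prob {x\<in>space M. X m t x = 1}) \<and>
        (\<Sum>t\<in>J m p. prob {x\<in>space M. X m t x = 1}) \<le> A m * (1 + e / 4))) sequentially"
    and summable: "summable (\<lambda>m. real (card (P m)) * exp (- (A m * e\<^sup>2 / 16)))"
  shows "AE x in M. eventually (\<lambda>m. \<forall>p\<in>P m. \<bar>(\<Sum>t\<in>J m p. X m t x) - A m\<bar> < e * A m) sequentially"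
proof -
  define bad where "bad m = (\<Union>p\<in>P m. {x\<in>space M. e * A m \<le> \<bar>(\<Sum>t\<in>J m p. X m t x) - A m\<bar>})" for m
  have bad_p_sets: "{x\<in>space M. e * A m \<le> \<bar>(\<Sum>t\<in>J m p. X m t x) - A m\<bar>} \<in> sets M"
    if "p \<in> P m" for m p
  proof -
    have [measurable]: "t \<in> J m p \<Longrightarrow> X m t \<in> borel_measurable M" for t
      using ind[OF that] unfolding indep_vars_def by auto
    show ?thesis by measurable
  qed
  have bad_sets: "bad m \<in> sets M" for m
    unfolding bad_def using finP bad_p_sets by blast
  have "eventually (\<lambda>m. norm (prob (bad m)) \<le> 2 * (real (card (P m)) * exp (- (A m * e\<^sup>2 / 16))))
      sequentially"
    using mean
  proof eventually_elim
    case (elim m)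
    have "prob (bad m) \<le> (\<Sum>p\<in>P m. prob {x\<in>space M. e * A m \<le> \<bar>(\<Sum>t\<in>J m p. X m t x) - A m\<bar>})"
      unfolding bad_def using finP bad_p_sets by (intro measure_UNION_le) auto
    also have "\<dots> \<le> (\<Sum>p\<in>P m. 2 * exp (- (A m * e\<^sup>2 / 16)))"
      using elim e by (intro sum_mono prob_sum_indep_01_relative_deviation finJ ind ae) auto
    finally show ?case by simp
  qed
  then have "summable (\<lambda>m. prob (bad m))"
    using summable by (rule summable_comparison_test_ev[OF _ summable_mult])
  then have "AE x in M. eventually (\<lambda>m. x \<in> space M - bad m) sequentially"
    using bad_sets by (intro borel_cantelli_AE1) (auto simp: emeasure_eq_measure)
  then show ?thesis
    by (rule AE_mp) (auto intro!: AE_I2 elim!: eventually_mono simp: bad_def not_le)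
qed

end

locale block_digraph_model = prob_space M for M :: "'a measure" +
  fixes r :: nat and \<xi> :: "nat \<Rightarrow> nat \<Rightarrow> nat \<Rightarrow> nat \<Rightarrow> nat \<Rightarrow> 'a \<Rightarrow> real"
    and q :: "nat \<Rightarrow> real" and q' :: "nat \<Rightarrow> nat \<Rightarrow> nat \<Rightarrow> real"
  assumes r_ge_1: "r \<ge> 1"
    and indep: "\<And>m. indep_vars (\<lambda>_. borel)
                   (\<lambda>(k, k', i, j). \<xi> m k k' i j) ({1..r} \<times> {1..r} \<times> {1..m} \<times> {1..m})"
    and diag: "\<And>m k i j. k \<in> {1..r} \<Longrightarrow> i \<in> {1..m} \<Longrightarrow> j \<in> {1..m} \<Longrightarrow>
                  bernoulli_rv M (\<xi> m k k i j) (q m)"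
    and offdiag: "\<And>m k k' i j. k \<in> {1..r} \<Longrightarrow> k' \<in> {1..r} \<Longrightarrow> k \<noteq> k' \<Longrightarrow>
                  i \<in> {1..m} \<Longrightarrow> j \<in> {1..m} \<Longrightarrow> bernoulli_rv M (\<xi> m k k' i j) (q' m k k')"
    and q_pos: "\<And>m. m \<ge> 1 \<Longrightarrow> q m > 0"
    and q_dense: "(\<lambda>m. 1 / q m) \<in> o(\<lambda>m. real (m * r) / ln (real (m * r)))"
    and offdiag_small: "\<And>k k'. k \<in> {1..r} \<Longrightarrow> k' \<in> {1..r} \<Longrightarrow> k \<noteq> k' \<Longrightarrow>
                  (\<lambda>m. q' m k k') \<in> o(q)"
begin

definition edge :: "nat \<Rightarrow> nat \<times> nat \<times> nat \<times> nat \<Rightarrow> 'a \<Rightarrow> real" where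
  "edge m = (\<lambda>(k, k', i, j). \<xi> m k k' i j)"

lemma out_deg_eq_sum_edge: "out_deg r \<xi> m k i x = (\<Sum>t\<in>{k} \<times> {1..r} \<times> {i} \<times> {1..m}. edge m t x)"
  by (simp add: out_deg_def edge_def sum.cartesian_product' split_beta)

lemma in_deg_eq_sum_edge: "in_deg r \<xi> m k i x = (\<Sum>t\<in>{k} \<times> {1..r} \<times> {1..m} \<times> {i}. edge m t x)"
  by (simp add: in_deg_def edge_def sum.cartesian_product' split_beta)

lemma edge_bernoulli:
  assumes "t \<in> {1..r} \<times> {1..r} \<times> {1..m} \<times> {1..m}"
  shows "bernoulli_rv M (edge m t) (case t of (k, k', _) \<Rightarrow> if k = k' then q m else q' m k k')"
  using assms diag offdiag by (auto simp: edge_def)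

lemma edge_01:
  assumes "t \<in> {1..r} \<times> {1..r} \<times> {1..m} \<times> {1..m}"
  shows "AE x in M. edge m t x \<in> {0, 1}"
  using edge_bernoulli[OF assms] by (simp add: bernoulli_rv_def)

lemma prob_edge_eq_1:
  assumes "k \<in> {1..r}" "k' \<in> {1..r}" "i \<in> {1..m}" "j \<in> {1..m}"
  shows "prob {x\<in>space M. edge m (k, k', i, j) x = 1} = (if k = k' then q m else q' m k k')"
  using edge_bernoulli[of "(k, k', i, j)" m] assms by (simp add: bernoulli_rv_def)

lemma offdiag_nonneg:
  assumes "k \<in> {1..r}" "k' \<in> {1..r}" "k \<noteq> k'" "m \<ge> 1"
  shows "0 \<le> q' m k k'"
  using prob_edge_eq_1[of k k' 1 m 1] assms by (metis atLeastAtMost_iff le_refl measure_nonneg)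

lemma sum_prob_edge_rect:
  assumes k: "k \<in> {1..r}" and ST: "S \<subseteq> {1..m}" "T \<subseteq> {1..m}"
  shows "(\<Sum>t\<in>{k} \<times> {1..r} \<times> S \<times> T. prob {x\<in>space M. edge m t x = 1})
       = real (card S * card T) * (q m + (\<Sum>k'\<in>{1..r} - {k}. q' m k k'))"
proof -
  have "(\<Sum>t\<in>{k} \<times> {1..r} \<times> S \<times> T. prob {x\<in>space M. edge m t x = 1})
      = (\<Sum>k'\<in>{1..r}. \<Sum>i\<in>S. \<Sum>j\<in>T. if k = k' then q m else q' m k k')"
    using k ST by (auto simp: sum.cartesian_product' subset_iff prob_edge_eq_1 intro!: sum.cong)
  also have "\<dots> = real (card S * card T) * (\<Sum>k'\<in>{1..r}. if k = k' then q m else q' m k k')"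
    by (simp add: sum_distrib_left mult.assoc)
  also have "(\<Sum>k'\<in>{1..r}. if k = k' then q m else q' m k k') = q m + (\<Sum>k'\<in>{1..r} - {k}. q' m k k')"
    using k by (subst sum.remove[of _ k]) auto
  finally show ?thesis .
qed

lemma indep_edge_rect:
  assumes "k \<in> {1..r}" "S \<subseteq> {1..m}" "T \<subseteq> {1..m}"
  shows "indep_vars (\<lambda>_. borel) (edge m) ({k} \<times> {1..r} \<times> S \<times> T)"
  unfolding edge_def by (rule indep_vars_subset[OF indep]) (use assms in blast)

lemma sum_prob_edge_rect_bounds:
  assumes k: "k \<in> {1..r}" and ST: "S \<subseteq> {1..m}" "T \<subseteq> {1..m}" "card S * card T = m"
    and m: "m \<ge> 1" and small: "(\<Sum>k'\<in>{1..r} - {k}. q' m k k') \<le> c * q m"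
  shows "real m * q m \<le> (\<Sum>t\<in>{k} \<times> {1..r} \<times> S \<times> T. prob {x\<in>space M. edge m t x = 1})"
    and "(\<Sum>t\<in>{k} \<times> {1..r} \<times> S \<times> T. prob {x\<in>space M. edge m t x = 1}) \<le> real m * q m * (1 + c)"
proof -
  have mean: "(\<Sum>t\<in>{k} \<times> {1..r} \<times> S \<times> T. prob {x\<in>space M. edge m t x = 1})
      = real m * (q m + (\<Sum>k'\<in>{1..r} - {k}. q' m k k'))"
    using sum_prob_edge_rect[OF k ST(1,2)] ST(3) by simp
  have "0 \<le> (\<Sum>k'\<in>{1..r} - {k}. q' m k k')"
    using k m by (intro sum_nonneg offdiag_nonneg) auto
  then show "real m * q m \<le> (\<Sum>t\<in>{k} \<times> {1..r} \<times> S \<times> T. prob {x\<in>space M. edge m t x = 1})"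
    unfolding mean by (intro mult_left_mono) auto
  have "real m * (q m + (\<Sum>k'\<in>{1..r} - {k}. q' m k k')) \<le> real m * (q m * (1 + c))"
    using small by (intro mult_left_mono) (auto simp: algebra_simps)
  then show "(\<Sum>t\<in>{k} \<times> {1..r} \<times> S \<times> T. prob {x\<in>space M. edge m t x = 1}) \<le> real m * q m * (1 + c)"
    unfolding mean by (simp add: mult.assoc)
qed

lemma eventually_q_pos: "eventually (\<lambda>m. 0 < q m) sequentially"
  using eventually_ge_at_top[of 1] by eventually_elim (rule q_pos)

lemma eventually_offdiag_sum_le:
  assumes c: "0 < c"
  shows "eventually (\<lambda>m. \<forall>k\<in>{1..r}. (\<Sum>k'\<in>{1..r} - {k}. q' m k k') \<le> c * q m) sequentially"
proof -
  have "eventually (\<lambda>m. q' m k k' \<le> c / r * q m) sequentially"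
    if "k \<in> {1..r}" "k' \<in> {1..r} - {k}" for k k'
  proof -
    have "0 < c / r" using c r_ge_1 by simp
    moreover have "k \<in> {1..r}" "k' \<in> {1..r}" "k \<noteq> k'" using that by auto
    ultimately have "eventually (\<lambda>m. norm (q' m k k') \<le> c / r * norm (q m)) sequentially"
      using landau_o.smallD[OF offdiag_small] by blast
    with eventually_q_pos show ?thesis by eventually_elim auto
  qed
  then have "eventually (\<lambda>m. \<forall>k\<in>{1..r}. \<forall>k'\<in>{1..r} - {k}. q' m k k' \<le> c / r * q m) sequentially"
    by (simp add: eventually_ball_finite_distrib)
  with eventually_q_pos show ?thesis
  proof eventually_elim
    case (elim m)
    show ?case
    proof
      fix k assume k: "k \<in> {1..r}"
      have "(\<Sum>k'\<in>{1..r} - {k}. q' m k k') \<le> (\<Sum>k'\<in>{1..r} - {k}. c / r * q m)"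
        using elim k by (intro sum_mono) auto
      also have "\<dots> = real (r - 1) * (c / r * q m)"
        using k by simp
      also have "\<dots> \<le> r * (c / r * q m)"
        using elim c by (intro mult_right_mono) auto
      also have "\<dots> = c * q m"
        using r_ge_1 by simp
      finally show "(\<Sum>k'\<in>{1..r} - {k}. q' m k k') \<le> c * q m" .
    qed
  qed
qed

lemma eventually_ln_le_mean_degree:
  assumes c: "0 < c"
  shows "eventually (\<lambda>m. c * ln (real m) \<le> real m * q m) sequentially"
proof -
  have "0 < 1 / (c * r)" using c r_ge_1 by simp
  from landau_o.smallD[OF q_dense this] eventually_q_pos eventually_ge_at_top[of 2]
  show ?thesis
  proof eventually_elim
    case (elim m)
    define N where "N = real (m * r)"
    have "2 \<le> N" using elim(3) r_ge_1 unfolding N_def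
      by (metis mult_le_mono nat_mult_1_right numeral_le_real_of_nat_iff)
    then have ln_N: "0 < ln N" by simp
    have "c * ln (real m) \<le> c * ln N"
      using elim(3) r_ge_1 c by (intro mult_left_mono) (auto simp: N_def)
    also have "\<dots> \<le> real m * q m"
    proof -
      have "1 / q m \<le> 1 / (c * r) * (N / ln N)"
        using elim(1,2) ln_N \<open>2 \<le> N\<close> by (simp add: N_def)
      then show ?thesis
        using elim(2) ln_N c r_ge_1 by (simp add: N_def field_simps)
    qed
    finally show ?case .
  qed
qed

lemma summable_card_exp_mean_degree:
  assumes c: "0 < c"
  shows "summable (\<lambda>m. real (card ({1..r} \<times> {1..m})) * exp (- (real m * q m * c)))"
proof (rule summable_comparison_test_ev)
  show "summable (\<lambda>m. real r * inverse (real m ^ 2))"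
    by (intro summable_mult inverse_power_summable) simp
  have "0 < 3 / c" using c by simp
  from eventually_ln_le_mean_degree[OF this] eventually_ge_at_top[of 1]
  show "eventually (\<lambda>m. norm (real (card ({1..r} \<times> {1..m})) * exp (- (real m * q m * c)))
      \<le> real r * inverse (real m ^ 2)) sequentially"
  proof eventually_elim
    case (elim m)
    have "exp (- (real m * q m * c)) \<le> exp (- (3 * ln (real m)))"
      using elim(1) c by (simp add: field_simps)
    also have "\<dots> = inverse (real m ^ 3)"
      using exp_of_nat_mult[of 3 "ln (real m)"] elim(2) by (simp add: exp_minus)
    finally have "real (r * m) * exp (- (real m * q m * c)) \<le> real (r * m) * inverse (real m ^ 3)"
      by (intro mult_left_mono) auto
    also have "\<dots> = real r * inverse (real m ^ 2)"
      using elim(2) by (simp add: field_simps power2_eq_square power3_eq_cube)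
    finally show ?case by simp
  qed
qed

lemma rect_sum_edge_concentration:
  fixes S T :: "nat \<Rightarrow> nat \<Rightarrow> nat set"
  assumes e: "0 < e" "e \<le> 1"
    and ST: "\<And>m i. i \<in> {1..m} \<Longrightarrow> S m i \<subseteq> {1..m} \<and> T m i \<subseteq> {1..m} \<and> card (S m i) * card (T m i) = m"
  shows "AE x in M. eventually (\<lambda>m. \<forall>k\<in>{1..r}. \<forall>i\<in>{1..m}.
      \<bar>(\<Sum>t\<in>{k} \<times> {1..r} \<times> S m i \<times> T m i. edge m t x) - real m * q m\<bar> < e * (real m * q m))
      sequentially"
proof -
  define J :: "nat \<Rightarrow> nat \<times> nat \<Rightarrow> (nat \<times> nat \<times> nat \<times> nat) set"
    where "J m = (\<lambda>(k, i). {k} \<times> {1..r} \<times> S m i \<times> T m i)" for m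
  have J_sub: "J m p \<subseteq> {1..r} \<times> {1..r} \<times> {1..m} \<times> {1..m}" if "p \<in> {1..r} \<times> {1..m}" for m p
    using that ST by (force simp: J_def)
  have "AE x in M. eventually (\<lambda>m. \<forall>p\<in>{1..r} \<times> {1..m}.
      \<bar>(\<Sum>t\<in>J m p. edge m t x) - real m * q m\<bar> < e * (real m * q m)) sequentially"
  proof (rule AE_eventually_uniform_concentration[OF _ _ _ _ e])
    show "finite (J m p)" if "p \<in> {1..r} \<times> {1..m}" for m p
      using J_sub[OF that] by (rule finite_subset) simp
    show "indep_vars (\<lambda>_. borel) (edge m) (J m p)" if p: "p \<in> {1..r} \<times> {1..m}" for m p
    proof -
      obtain k i where ki: "p = (k, i)" "k \<in> {1..r}" "i \<in> {1..m}" using p by blast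
      with ST[of i m] have "S m i \<subseteq> {1..m}" "T m i \<subseteq> {1..m}" by auto
      with ki show ?thesis unfolding J_def by (simp only: prod.case) (rule indep_edge_rect)
    qed
    show "AE x in M. edge m t x \<in> {0, 1}" if "p \<in> {1..r} \<times> {1..m}" "t \<in> J m p" for m p t
      using J_sub[OF that(1)] that(2) by (intro edge_01) auto
    show "summable (\<lambda>m. real (card ({1..r} \<times> {1..m})) * exp (- (real m * q m * e\<^sup>2 / 16)))"
      using summable_card_exp_mean_degree[of "e\<^sup>2 / 16"] e by simp
    have "0 < e / 4" using e by simp
    from eventually_offdiag_sum_le[OF this] eventually_q_pos eventually_ge_at_top[of 1]
    show "eventually (\<lambda>m. 0 < real m * q m \<and> (\<forall>p\<in>{1..r} \<times> {1..m}.
        real m * q m \<le> (\<Sum>t\<in>J m p. prob {x\<in>space M. edge m t x = 1}) \<and>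
        (\<Sum>t\<in>J m p. prob {x\<in>space M. edge m t x = 1}) \<le> real m * q m * (1 + e / 4))) sequentially"
    proof eventually_elim
      case (elim m)
      have "real m * q m \<le> (\<Sum>t\<in>J m p. prob {x\<in>space M. edge m t x = 1}) \<and>
          (\<Sum>t\<in>J m p. prob {x\<in>space M. edge m t x = 1}) \<le> real m * q m * (1 + e / 4)"
        if p: "p \<in> {1..r} \<times> {1..m}" for p
      proof -
        obtain k i where ki: "p = (k, i)" "k \<in> {1..r}" "i \<in> {1..m}" using p by blast
        with ST[of i m] have "S m i \<subseteq> {1..m}" "T m i \<subseteq> {1..m}" "card (S m i) * card (T m i) = m"
          by auto
        from sum_prob_edge_rect_bounds[OF ki(2) this elim(3) bspec[OF elim(1) ki(2)]] ki(1)
        show ?thesis by (simp add: J_def)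
      qed
      with elim(2,3) show ?case by auto
    qed
  qed simp
  then show ?thesis
    by (simp add: J_def)
qed

lemma degree_concentration:
  assumes "0 < e" "e \<le> 1"
  shows "AE x in M. eventually (\<lambda>m. \<forall>k\<in>{1..r}. \<forall>i\<in>{1..m}.
      \<bar>out_deg r \<xi> m k i x - real m * q m\<bar> < e * (real m * q m) \<and>
      \<bar>in_deg r \<xi> m k i x - real m * q m\<bar> < e * (real m * q m)) sequentially"
proof -
  have "AE x in M. eventually (\<lambda>m. \<forall>k\<in>{1..r}. \<forall>i\<in>{1..m}.
      \<bar>out_deg r \<xi> m k i x - real m * q m\<bar> < e * (real m * q m)) sequentially"
    using rect_sum_edge_concentration[OF assms, of "\<lambda>m i. {i}" "\<lambda>m i. {1..m}"]
    by (simp add: out_deg_eq_sum_edge)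
  moreover have "AE x in M. eventually (\<lambda>m. \<forall>k\<in>{1..r}. \<forall>i\<in>{1..m}.
      \<bar>in_deg r \<xi> m k i x - real m * q m\<bar> < e * (real m * q m)) sequentially"
    using rect_sum_edge_concentration[OF assms, of "\<lambda>m i. {1..m}" "\<lambda>m i. {i}"]
    by (simp add: in_deg_eq_sum_edge)
  ultimately show ?thesis
    by eventually_elim (auto elim: eventually_elim2)
qed

end

lemma limsup_SUP_normalized_degree_sum_le:
  fixes d d' :: "nat \<Rightarrow> nat \<Rightarrow> nat \<Rightarrow> real" and q :: "nat \<Rightarrow> real" and r :: nat
  assumes r: "r \<ge> 1" and q: "eventually (\<lambda>m. 0 < q m) sequentially"
    and bound: "eventually (\<lambda>m. \<forall>k\<in>{1..r}. \<forall>i\<in>{1..m}.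
        d m k i \<le> 2 * (real m * q m) \<and> d' m k i \<le> 2 * (real m * q m)) sequentially"
  shows "limsup (\<lambda>m. ereal (SUP (k, i) \<in> {1..r} \<times> {1..m}.
      1 / q m * (d m k i / real (m * r) + d' m k i / real (m * r)))) \<le> ereal 4"
proof (rule Limsup_bounded)
  from q bound eventually_ge_at_top[of 1]
  show "eventually (\<lambda>m. ereal (SUP (k, i) \<in> {1..r} \<times> {1..m}.
      1 / q m * (d m k i / real (m * r) + d' m k i / real (m * r))) \<le> ereal 4) sequentially"
  proof eventually_elim
    case (elim m)
    have "(SUP (k, i) \<in> {1..r} \<times> {1..m}.
        1 / q m * (d m k i / real (m * r) + d' m k i / real (m * r))) \<le> 4"
    proof (rule cSUP_least)
      show "{1..r} \<times> {1..m} \<noteq> {}" using elim(3) r by auto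
      fix p assume "p \<in> {1..r} \<times> {1..m}"
      then obtain k i where ki: "p = (k, i)" "k \<in> {1..r}" "i \<in> {1..m}" by blast
      have pos: "0 < q m" "0 < real m" "0 < real r" using elim(1,3) r by auto
      then have Nq: "0 < real (m * r) * q m" by simp
      have "1 / q m * (d m k i / real (m * r) + d' m k i / real (m * r))
          = (d m k i + d' m k i) / (real (m * r) * q m)"
        using pos by (simp add: field_simps)
      also have "\<dots> \<le> 4 * (real m * q m) / (real (m * r) * q m)"
      proof (rule divide_right_mono)
        have "d m k i \<le> 2 * (real m * q m)" "d' m k i \<le> 2 * (real m * q m)"
          using elim(2) ki(2,3) by blast+
        then show "d m k i + d' m k i \<le> 4 * (real m * q m)" by simp
      qed (use Nq in simp)
      also have "\<dots> = 4 / r"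
        using pos by (simp add: field_simps)
      also have "\<dots> \<le> 4"
        using r by (simp add: divide_le_eq)
      finally show "(case p of (k, i) \<Rightarrow> 1 / q m * (d m k i / real (m * r) + d' m k i / real (m * r))) \<le> 4"
        using ki(1) by simp
    qed
    then show ?case by simp
  qed
qed

lemma SUP_normalized_deviation_tendsto_0:
  fixes d :: "nat \<Rightarrow> nat \<Rightarrow> nat \<Rightarrow> real" and q :: "nat \<Rightarrow> real" and r :: nat
  assumes r: "r \<ge> 1" and q: "eventually (\<lambda>m. 0 < q m) sequentially"
    and dev: "\<And>n. eventually (\<lambda>m. \<forall>k\<in>{1..r}. \<forall>i\<in>{1..m}.
        \<bar>d m k i - real m * q m\<bar> < inverse (real (Suc n)) * (real m * q m)) sequentially"
  shows "(\<lambda>m. SUP (k, i) \<in> {1..r} \<times> {1..m}. \<bar>d m k i / (real (m * r) * q m) - 1 / real r\<bar>) \<longlonglongrightarrow> 0"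
  unfolding tendsto_iff
proof (intro allI impI)
  fix \<epsilon> :: real assume "0 < \<epsilon>"
  then obtain n where n: "inverse (real (Suc n)) < \<epsilon>" using reals_Archimedean by blast
  from q dev[of n] eventually_ge_at_top[of 1]
  show "eventually (\<lambda>m. dist (SUP (k, i) \<in> {1..r} \<times> {1..m}.
      \<bar>d m k i / (real (m * r) * q m) - 1 / real r\<bar>) 0 < \<epsilon>) sequentially"
  proof eventually_elim
    case (elim m)
    define f where "f = (\<lambda>(k, i). \<bar>d m k i / (real (m * r) * q m) - 1 / real r\<bar>)"
    have ne: "{1..r} \<times> {1..m} \<noteq> {}" using elim(3) r by auto
    have f_le: "f p \<le> inverse (real (Suc n))" if p: "p \<in> {1..r} \<times> {1..m}" for p
    proof -
      obtain k i where ki: "p = (k, i)" "k \<in> {1..r}" "i \<in> {1..m}" using p by blast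
      have pos: "0 < q m" "0 < real m" "0 < real r" using elim(1,3) r by auto
      then have A: "0 < real m * q m" by simp
      have "d m k i / (real (m * r) * q m) - 1 / real r = (d m k i - real m * q m) / (real m * q m) / real r"
        using pos by (simp add: field_simps)
      then have "f p = \<bar>d m k i - real m * q m\<bar> / (real m * q m) / real r"
        using A pos by (simp add: f_def ki(1) abs_divide)
      also have "\<dots> \<le> \<bar>d m k i - real m * q m\<bar> / (real m * q m)"
        using divide_left_mono[of 1 "real r" "\<bar>d m k i - real m * q m\<bar> / (real m * q m)"] A r
        by simp
      also have "\<dots> \<le> inverse (real (Suc n))"
      proof -
        have "\<bar>d m k i - real m * q m\<bar> < inverse (real (Suc n)) * (real m * q m)"
          using elim(2) ki(2,3) by blast
        then show ?thesis using A by (simp add: divide_le_eq)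
      qed
      finally show ?thesis .
    qed
    have "(SUP p \<in> {1..r} \<times> {1..m}. f p) \<le> inverse (real (Suc n))"
      using ne f_le by (rule cSUP_least)
    moreover have "0 \<le> (SUP p \<in> {1..r} \<times> {1..m}. f p)"
      using ne by (intro cSUP_upper2[of _ _ "(1, 1)"] bdd_above_finite) (auto simp: f_def elim(3) r)
    ultimately show ?case
      using n by (simp add: f_def)
  qed
qed

theorem lemma4:
  fixes M :: "'a measure" and r :: nat
    and \<xi> :: "nat \<Rightarrow> nat \<Rightarrow> nat \<Rightarrow> nat \<Rightarrow> nat \<Rightarrow> 'a \<Rightarrow> real"
    and q :: "nat \<Rightarrow> real" and q' :: "nat \<Rightarrow> nat \<Rightarrow> nat \<Rightarrow> real"
  assumes "prob_space M"
    and "r \<ge> 1"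
    and indep: "\<And>m. prob_space.indep_vars M (\<lambda>_. borel)
                   (\<lambda>(k, k', i, j). \<xi> m k k' i j) ({1..r} \<times> {1..r} \<times> {1..m} \<times> {1..m})"
    and diag: "\<And>m k i j. k \<in> {1..r} \<Longrightarrow> i \<in> {1..m} \<Longrightarrow> j \<in> {1..m} \<Longrightarrow>
                  bernoulli_rv M (\<xi> m k k i j) (q m)"
    and offdiag: "\<And>m k k' i j. k \<in> {1..r} \<Longrightarrow> k' \<in> {1..r} \<Longrightarrow> k \<noteq> k' \<Longrightarrow>
                  i \<in> {1..m} \<Longrightarrow> j \<in> {1..m} \<Longrightarrow> bernoulli_rv M (\<xi> m k k' i j) (q' m k k')"
    and qpos: "\<And>m. m \<ge> 1 \<Longrightarrow> q m > 0"
    and qdense: "(\<lambda>m. 1 / q m) \<in> o(\<lambda>m. real (m * r) / ln (real (m * r)))"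
    and qsmall: "\<And>k k'. k \<in> {1..r} \<Longrightarrow> k' \<in> {1..r} \<Longrightarrow> k \<noteq> k' \<Longrightarrow>
                  (\<lambda>m. q' m k k') \<in> o(q)"
  shows "(\<exists>C::real. AE x in M.
            limsup (\<lambda>m. ereal (SUP (k, i) \<in> {1..r} \<times> {1..m}.
                1 / q m * (out_deg r \<xi> m k i x / real (m * r) + in_deg r \<xi> m k i x / real (m * r))))
            \<le> ereal C)
       \<and> (AE x in M.
            (\<lambda>m. SUP (k, i) \<in> {1..r} \<times> {1..m}.
                \<bar>out_deg r \<xi> m k i x / (real (m * r) * q m) - 1 / real r\<bar>) \<longlonglongrightarrow> 0)"
proof -
  interpret block_digraph_model M r \<xi> q q'
    by (rule block_digraph_model.intro[OF assms(1) block_digraph_model_axioms.intro[OF assms(2-)]])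
  have "AE x in M. limsup (\<lambda>m. ereal (SUP (k, i) \<in> {1..r} \<times> {1..m}.
      1 / q m * (out_deg r \<xi> m k i x / real (m * r) + in_deg r \<xi> m k i x / real (m * r)))) \<le> ereal 4"
    using degree_concentration[OF zero_less_one order_refl]
  proof eventually_elim
    case (elim x)
    show ?case
      by (rule limsup_SUP_normalized_degree_sum_le[OF r_ge_1 eventually_q_pos])
        (use elim in \<open>force elim!: eventually_mono simp: abs_less_iff\<close>)
  qed
  moreover have "AE x in M. \<forall>n. eventually (\<lambda>m. \<forall>k\<in>{1..r}. \<forall>i\<in>{1..m}.
      \<bar>out_deg r \<xi> m k i x - real m * q m\<bar> < inverse (real (Suc n)) * (real m * q m) \<and>
      \<bar>in_deg r \<xi> m k i x - real m * q m\<bar> < inverse (real (Suc n)) * (real m * q m)) sequentially"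
    unfolding AE_all_countable by (intro allI degree_concentration) (auto simp: inverse_le_1_iff)
  then have "AE x in M. (\<lambda>m. SUP (k, i) \<in> {1..r} \<times> {1..m}.
      \<bar>out_deg r \<xi> m k i x / (real (m * r) * q m) - 1 / real r\<bar>) \<longlonglongrightarrow> 0"
  proof eventually_elim
    case (elim x)
    show ?case
      by (rule SUP_normalized_deviation_tendsto_0[OF r_ge_1 eventually_q_pos])
        (use elim in \<open>force elim!: eventually_mono\<close>)
  qed
  ultimately show ?thesis by blast
qed

end
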